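(* For every $n\ge1$ and every $g\in\mathcal D_n$, $$a(N)\,v^N_n(g)=v^N_{n+1}(a\,g),\qquad a^*(N)\,v^N_n(g)=v^N_{n-1}(a^*g)+O(1/N),$$ where $O(1/N)$ denotes a vector of norm at most $C/N$ with $C>0$ independent of $N$.
   Context: Continuous side: $\mathcal X_{n,m}=\{(x_1,\dots,x_n)\in\mathbb{R}^n:x_1>\dots>x_m<\dots<x_n\}$, $\mathcal X_n=\bigcup_m\mathcal X_{n,m}$, $\mathbb 1_n,\mathbb 1_{n,m}$ their indicators; $\mathcal{CV}=\mathbb{C}\Lambda\oplus\bigoplus_{n\ge1}L^2(\mathcal X_n)$. $a=a(\mathbb 1_{[0,1]})$: $a\Lambda=\mathbb 1_{[0,1]}$, $(ag)(x,x_1,\dots,x_n)=\mathbb 1_{[0,1]}(x)\mathbb 1_{n+1}(x,x_1,\dots,x_n)g(x_1,\dots,x_n)$; $a^*$: $a^*\Lambda=0$, $a^*g=(\int_0^1g)\Lambda$ for $g\in L^2(\mathcal X_1)$, and $(a^*g)(\vec x)=\mathbb 1_{n,1}(\vec x)\int_0^{x_1}g(x,\vec x)dx+\int_{x_1}^1g(x,\vec x)dx$ for $g\in L^2(\mathcal X_{n+1})$. $\mathcal D_n$ ($n\ge1$) is the set of $g\in L^2(\mathcal X_n)$ that vanish outside $[0,1]^n$ and coincide on each $\mathcal X_{n,m}\cap[0,1]^n$ with a polynomial $g_{n,m}$; $\mathcal D_0=\mathbb{C}\Lambda$. Discrete side: $I=\mathbb{N}_+$, $I_n$ the set of $(i_1,\dots,i_n)$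 with $i_1>\dots>i_m<\dots<i_n$ for some $m$; $\mathcal{DV}$ with orthonormal basis $\{\Omega\}\cup\{e_{i_1}\otimes\dots\otimes e_{i_n}:(i_1,\dots,i_n)\in I_n\}$; $a_i\Omega=e_i$, $a_i(e_{i_1}\otimes\dots\otimes e_{i_n})=\mathbf 1[(i,i_1,\dots,i_n)\in I_{n+1}]\,e_i\otimes e_{i_1}\otimes\dots\otimes e_{i_n}$; $a(N)=N^{-1/2}\sum_{i=1}^Na_i$, $a^*(N)=a(N)^*$. Vectors: $v^N_0(c\Lambda)=c\Omega$ and $v^N_n(g)=N^{-n/2}\sum_{(i_1,\dots,i_n)\in I_n\cap[N]^n}g(i_1/N,\dots,i_n/N)\,e_{i_1}\otimes\dots\otimes e_{i_n}$ for $g\in\mathcal D_n$. *)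

theory Defs
  imports "HOL-Analysis.Analysis"
begin

definition vshape :: "nat \<Rightarrow> 'a::linorder list \<Rightarrow> bool" where
  "vshape m xs \<longleftrightarrow> 1 \<le> m \<and> m \<le> length xs \<and>
     sorted_wrt (>) (take m xs) \<and> sorted_wrt (<) (drop (m - 1) xs)"

definition inX :: "real list \<Rightarrow> bool" where
  "inX xs \<longleftrightarrow> (\<exists>m. vshape m xs)"

section \<open>Continuous side: vectors of CV represented by functions on real lists;
  a function of lists of length n represents an element of L^2(X_n), and the value
  at the empty list represents the coefficient of Lambda.\<close>

definition poly_fun :: "nat \<Rightarrow> (real list \<Rightarrow> complex) \<Rightarrow> bool" where
  "poly_fun n p \<longleftrightarrow> (\<exists>(d::nat) (c::nat list \<Rightarrow> complex). \<forall>xs. length xs = n \<longrightarrow>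
      p xs = (\<Sum>\<alpha>\<in>{\<alpha>. length \<alpha> = n \<and> set \<alpha> \<subseteq> {..d}}.
                 c \<alpha> * (\<Prod>i<n. complex_of_real (xs ! i) ^ (\<alpha> ! i))))"

definition Dn :: "nat \<Rightarrow> (real list \<Rightarrow> complex) set" where
  "Dn n = {g.
     (\<forall>xs. length xs = n \<and> inX xs \<and> \<not> (\<forall>x\<in>set xs. 0 \<le> x \<and> x \<le> 1) \<longrightarrow> g xs = 0) \<and>
     (\<forall>m\<in>{1..n}. \<exists>p. poly_fun n p \<and>
        (\<forall>xs. length xs = n \<and> vshape m xs \<and> (\<forall>x\<in>set xs. 0 \<le> x \<and> x \<le> 1) \<longrightarrow> g xs = p xs))}"

fun a_cont :: "(real list \<Rightarrow> complex) \<Rightarrow> real list \<Rightarrow> complex" where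
  "a_cont g [] = 0"
| "a_cont g (x # xs) =
     (if x \<in> {0..1} \<and> (xs = [] \<or> inX (x # xs)) then g xs else 0)"

fun a_adj_cont :: "(real list \<Rightarrow> complex) \<Rightarrow> real list \<Rightarrow> complex" where
  "a_adj_cont g [] = (LBINT x:{0..1}. g [x])"
| "a_adj_cont g (x1 # xs) =
     (if vshape 1 (x1 # xs) then (LBINT x:{0..x1}. g (x # x1 # xs)) else 0)
     + (LBINT x:{x1..1}. g (x # x1 # xs))"

section \<open>Discrete side: vectors of DV as coefficient functions on index lists;
  the empty list stands for Omega, a list (i_1,...,i_n) for e_{i_1} \<otimes> ... \<otimes> e_{i_n}.\<close>

definition validI :: "nat list \<Rightarrow> bool" where
  "validI ws \<longleftrightarrow> (ws = [] \<or> (\<exists>m. vshape m ws)) \<and> (\<forall>i\<in>set ws. 1 \<le> i)"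

definition a_i :: "nat \<Rightarrow> (nat list \<Rightarrow> complex) \<Rightarrow> nat list \<Rightarrow> complex" where
  "a_i i v w = (case w of [] \<Rightarrow> 0 | j # ws \<Rightarrow> if j = i \<and> validI w then v ws else 0)"

definition aN :: "nat \<Rightarrow> (nat list \<Rightarrow> complex) \<Rightarrow> nat list \<Rightarrow> complex" where
  "aN N v w = complex_of_real (1 / sqrt (real N)) * (\<Sum>i=1..N. a_i i v w)"

text \<open>The adjoint a^*(N) = a(N)^*, written out on coefficients (a_i^* e_{i#ws} = e_ws).\<close>
definition aN_adj :: "nat \<Rightarrow> (nat list \<Rightarrow> complex) \<Rightarrow> nat list \<Rightarrow> complex" where
  "aN_adj N v ws = complex_of_real (1 / sqrt (real N)) *
     (\<Sum>i=1..N. if validI ws \<and> validI (i # ws) then v (i # ws) else 0)"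

definition dv_norm :: "(nat list \<Rightarrow> complex) \<Rightarrow> real" where
  "dv_norm v = sqrt (infsum (\<lambda>w. (cmod (v w))\<^sup>2) UNIV)"

text \<open>The embedding v^N_n (for n = 0 it gives c Omega from c Lambda).\<close>
definition vN :: "nat \<Rightarrow> nat \<Rightarrow> (real list \<Rightarrow> complex) \<Rightarrow> nat list \<Rightarrow> complex" where
  "vN N n g w = (if length w = n \<and> validI w \<and> (\<forall>i\<in>set w. i \<le> N)
       then complex_of_real (real N powr (- real n / 2)) * g (map (\<lambda>i. real i / real N) w)
       else 0)"

end

theory Submission
  imports Defs
begin

text \<open>The creation identity is a direct computation: the prefactor \<open>N^(-1/2)\<close> of \<open>a(N)\<close> turns
  the normalisation \<open>N^(-n/2)\<close> of \<open>v\<^sup>N\<^sub>n\<close> into \<open>N^(-(n+1)/2)\<close>.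
  For the annihilation operator, the coefficient of \<open>a\<^sup>*(N) v\<^sup>N\<^sub>n(g)\<close> at an admissible word \<open>w\<close>
  is \<open>N^(-(n-1)/2)\<close> times the right-endpoint Riemann sum \<open>(1/N) \<Sum>\<^sub>i g(i/N, w/N)\<close>, whereas
  \<open>(a\<^sup>*g)(w/N)\<close> is the integral of \<open>x \<mapsto> g(x, w/N)\<close> over the one or two intervals on which
  prepending \<open>x\<close> preserves the V-shape. On each of them \<open>g\<close> agrees with a polynomial, which is
  bounded and Lipschitz in its first variable uniformly on \<open>[0,1]\<^sup>n\<close>, so every coefficient of the
  error is \<open>O(N^(-(n-1)/2) / N)\<close>. At most \<open>N^(n-1)\<close> coefficients are nonzero, hence the error
  has norm \<open>O(1/N)\<close>.\<close>

abbreviation grid :: "nat \<Rightarrow> nat list \<Rightarrow> real list" where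
  "grid N ws \<equiv> map (\<lambda>i. real i / real N) ws"

lemma vshape_map_iff:
  assumes "\<And>x y. f x < f y \<longleftrightarrow> x < y"
  shows "vshape m (map f xs) \<longleftrightarrow> vshape m xs"
  using assms by (simp add: vshape_def sorted_wrt_map take_map drop_map)

lemma vshape_scaled_iff:
  assumes "N \<ge> 1"
  shows "vshape m (grid N ws) \<longleftrightarrow> vshape m ws"
  using assms by (intro vshape_map_iff) (simp add: divide_less_cancel)

lemma vshape_Cons_tl:
  assumes "vshape m (x # xs)" "xs \<noteq> []"
  shows "\<exists>m'. vshape m' xs"
proof (cases "m = 1")
  case True
  with assms have "vshape 1 xs" by (cases xs) (auto simp: vshape_def)
  then show ?thesis by blast
next
  case False
  with assms have "vshape (m - 1) xs" by (cases m) (auto simp: vshape_def drop_Cons')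
  then show ?thesis by blast
qed

lemma vshape_Cons_greater:
  "vshape m (y # ys) \<Longrightarrow> y < x \<Longrightarrow> vshape (Suc m) (x # y # ys)"
  by (cases m) (auto simp: vshape_def drop_Cons')

lemma vshape_Cons_less:
  "vshape 1 (y # ys) \<Longrightarrow> x < y \<Longrightarrow> vshape 1 (x # y # ys)"
  by (auto simp: vshape_def)

lemma vshape_Cons_Cons_cases:
  assumes "vshape m (x # y # ys)"
  shows "y < x \<and> vshape (m - 1) (y # ys) \<or> x < y \<and> vshape 1 (y # ys)"
  using assms by (cases m; cases "m - 1") (auto simp: vshape_def)

lemma vshape_singleton: "vshape 1 [x]"
  by (simp add: vshape_def)

lemma validI_Cons_tl: "validI (j # ws) \<Longrightarrow> ws \<noteq> [] \<Longrightarrow> validI ws"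
  unfolding validI_def using vshape_Cons_tl by fastforce

lemma validI_Cons_Cons_iff:
  assumes "validI (w # ws)"
  shows "validI (i # w # ws) \<longleftrightarrow> 1 \<le> i \<and> (w < i \<or> i < w \<and> vshape 1 (w # ws))"
proof
  assume "validI (i # w # ws)"
  then show "1 \<le> i \<and> (w < i \<or> i < w \<and> vshape 1 (w # ws))"
    using vshape_Cons_Cons_cases by (fastforce simp: validI_def)
next
  assume "1 \<le> i \<and> (w < i \<or> i < w \<and> vshape 1 (w # ws))"
  moreover obtain m where "vshape m (w # ws)"
    using assms by (auto simp: validI_def)
  ultimately show "validI (i # w # ws)"
    using assms vshape_Cons_greater vshape_Cons_less by (fastforce simp: validI_def)
qed

lemma inX_scaled:
  assumes "N \<ge> 1" "validI ws" "ws \<noteq> []"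
  shows "inX (grid N ws)"
  using assms by (auto simp: inX_def validI_def vshape_scaled_iff)

lemma inverse_sqrt_mult_powr:
  assumes "N \<ge> 1"
  shows "1 / sqrt (real N) * real N powr (- real n / 2) = real N powr (- real (n + 1) / 2)"
  using assms
  by (simp add: powr_half_sqrt[symmetric] powr_minus_divide[symmetric] powr_add[symmetric] field_simps)

lemma sum_a_i_Cons:
  "(\<Sum>i=1..N. a_i i v (j # ws)) = (if 1 \<le> j \<and> j \<le> N \<and> validI (j # ws) then v ws else 0)"
  unfolding a_i_def by (auto simp: sum.delta')

theorem aN_vN:
  assumes "n \<ge> 1" "N \<ge> 1"
  shows "aN N (vN N n g) = vN N (n + 1) (a_cont g)"
proof
  fix w
  show "aN N (vN N n g) w = vN N (n + 1) (a_cont g) w"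
  proof (cases w)
    case Nil
    then show ?thesis by (simp add: aN_def a_i_def vN_def)
  next
    case (Cons j ws)
    show ?thesis
    proof (cases "length ws = n \<and> validI (j # ws) \<and> (\<forall>i\<in>set (j # ws). i \<le> N)")
      case True
      then have "ws \<noteq> []" "validI ws" "1 \<le> j" "real j / real N \<in> {0..1}"
        using assms validI_Cons_tl[of j ws] by (auto simp: validI_def)
      moreover have "inX (grid N (j # ws))"
        using inX_scaled[OF assms(2)] True by blast
      moreover have "complex_of_real (1 / sqrt (real N)) * complex_of_real (real N powr (- real n / 2))
          = complex_of_real (real N powr (- real (n + 1) / 2))"
        using inverse_sqrt_mult_powr[OF assms(2)] by (metis of_real_mult)
      ultimately show ?thesis
        using True unfolding aN_def Cons sum_a_i_Cons
        by (simp add: vN_def mult.assoc[symmetric] del: of_nat_Suc)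
    next
      case False
      then show ?thesis unfolding aN_def Cons sum_a_i_Cons by (auto simp: vN_def)
    qed
  qed
qed

lemma norm_monomial_le_1:
  assumes "\<And>i. i < k \<Longrightarrow> \<bar>xs ! i\<bar> \<le> 1"
  shows "norm (\<Prod>i<k. complex_of_real (xs ! i) ^ e i) \<le> 1"
proof -
  have "norm (\<Prod>i<k. complex_of_real (xs ! i) ^ e i) \<le> (\<Prod>i<k. norm (complex_of_real (xs ! i) ^ e i))"
    by (rule norm_prod_le)
  also have "\<dots> \<le> 1"
    using assms by (intro prod_le_1) (auto simp: norm_power intro!: power_le_one)
  finally show ?thesis .
qed

lemma poly_fun_Cons_bounds:
  assumes "poly_fun (Suc k) p"
  obtains L M where
    "\<And>x xs. length xs = k \<Longrightarrow> set xs \<subseteq> {0..1} \<Longrightarrow> x \<in> {0..1} \<Longrightarrow> cmod (p (x # xs)) \<le> M"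
    and "\<And>xs. length xs = k \<Longrightarrow> set xs \<subseteq> {0..1} \<Longrightarrow> L-lipschitz_on {0..1} (\<lambda>x. p (x # xs))"
proof -
  obtain d c where p: "\<And>zs. length zs = Suc k \<Longrightarrow> p zs = (\<Sum>\<alpha>\<in>{\<alpha>. length \<alpha> = Suc k \<and> set \<alpha> \<subseteq> {..d}}.
      c \<alpha> * (\<Prod>i<Suc k. complex_of_real (zs ! i) ^ (\<alpha> ! i)))"
    using assms unfolding poly_fun_def by blast
  define A where "A = {\<alpha>::nat list. length \<alpha> = Suc k \<and> set \<alpha> \<subseteq> {..d}}"
  define M where "M = (\<Sum>\<alpha>\<in>A. cmod (c \<alpha>))"
  define R where "R \<alpha> xs = (\<Prod>i<k. complex_of_real (xs ! i) ^ (\<alpha> ! Suc i))" for \<alpha> xs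
  have p_Cons: "p (x # xs) = (\<Sum>\<alpha>\<in>A. c \<alpha> * complex_of_real x ^ (\<alpha> ! 0) * R \<alpha> xs)"
    if "length xs = k" for x xs
    using that by (simp add: p A_def R_def prod.lessThan_Suc_shift mult.assoc del: prod.lessThan_Suc)
  have R_le: "norm (R \<alpha> xs) \<le> 1" if "set xs \<subseteq> {0..1}" "length xs = k" for \<alpha> xs
    unfolding R_def using that nth_mem by (intro norm_monomial_le_1) fastforce
  have exponent_le: "\<alpha> ! 0 \<le> d" if "\<alpha> \<in> A" for \<alpha>
    using that nth_mem[of 0 \<alpha>] unfolding A_def by (metis (mono_tags) atMost_iff mem_Collect_eq subsetD zero_less_Suc)
  show thesis
  proof
    fix x :: real and xs :: "real list" assume xs: "length xs = k" "set xs \<subseteq> {0..1}" and x: "x \<in> {0..1}"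
    have "cmod (p (x # xs)) \<le> (\<Sum>\<alpha>\<in>A. cmod (c \<alpha>) * (norm (complex_of_real x) ^ (\<alpha> ! 0) * norm (R \<alpha> xs)))"
      unfolding p_Cons[OF xs(1)] by (rule order_trans[OF norm_sum]) (simp add: norm_mult norm_power mult.assoc)
    also have "\<dots> \<le> M"
      unfolding M_def using x R_le[OF xs(2,1)]
      by (intro sum_mono mult_right_le_one_le mult_le_one) (auto intro: power_le_one)
    finally show "cmod (p (x # xs)) \<le> M" .
  next
    fix xs :: "real list" assume xs: "length xs = k" "set xs \<subseteq> {0..1}"
    show "(real d * M)-lipschitz_on {0..1} (\<lambda>x. p (x # xs))"
    proof (rule lipschitz_onI)
      fix x y :: real assume "x \<in> {0..1}" "y \<in> {0..1}"
      then have power_diff: "norm (complex_of_real x ^ e - complex_of_real y ^ e) \<le> real d * dist x y"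
        if "e \<le> d" for e
        using norm_power_diff[of "complex_of_real x" "complex_of_real y" e] that
        by (auto simp: dist_real_def simp flip: of_real_diff
            intro: order_trans[OF _ mult_right_mono[of "real e" "real d"]])
      have "dist (p (x # xs)) (p (y # xs))
          = norm (\<Sum>\<alpha>\<in>A. c \<alpha> * (complex_of_real x ^ (\<alpha> ! 0) - complex_of_real y ^ (\<alpha> ! 0)) * R \<alpha> xs)"
        unfolding dist_norm p_Cons[OF xs(1)] by (simp add: sum_subtractf algebra_simps)
      also have "\<dots> \<le> (\<Sum>\<alpha>\<in>A. cmod (c \<alpha>) * (real d * dist x y))"
        using R_le[OF xs(2,1)] power_diff exponent_le
        by (intro order_trans[OF norm_sum] sum_mono)
           (auto simp: norm_mult mult.assoc intro!: mult_left_mono order_trans[OF mult_right_le_one_le])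
      finally show "dist (p (x # xs)) (p (y # xs)) \<le> real d * M * dist x y"
        by (simp add: M_def sum_distrib_left mult_ac)
    qed (simp add: M_def sum_nonneg)
  qed
qed

lemma right_endpoint_error:
  fixes f :: "real \<Rightarrow> complex"
  assumes lip: "L-lipschitz_on {0..1} f" and N: "N \<ge> 1" and k: "Suc k \<le> N"
  shows "cmod (f (real (Suc k) / real N) / of_nat N - integral {real k / real N..real (Suc k) / real N} f)
     \<le> L / real N ^ 2"
proof -
  define a where "a = real k / real N"
  define b where "b = real (Suc k) / real N"
  have ab: "b - a = 1 / real N" and "a \<le> b"
    using N by (auto simp: a_def b_def field_simps)
  have sub: "{a..b} \<subseteq> {0..1}"
    using N k by (auto simp: a_def b_def field_simps)
  have cont: "continuous_on {a..b} f"
    using lipschitz_on_continuous_on[OF lipschitz_on_subset[OF lip sub]] .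
  have "integral {a..b} (\<lambda>x. f b - f x) = f b / of_nat N - integral {a..b} f"
    using cont \<open>a \<le> b\<close> ab by (simp add: integral_diff integrable_continuous_real scaleR_conv_of_real field_simps)
  moreover have "cmod (integral {a..b} (\<lambda>x. f b - f x)) \<le> (L / real N) * (b - a)"
  proof (rule integral_bound[OF \<open>a \<le> b\<close>])
    show "continuous_on {a..b} (\<lambda>x. f b - f x)"
      using cont by (intro continuous_intros) auto
    fix t assume t: "t \<in> {a..b}"
    then have "cmod (f b - f t) \<le> L * \<bar>b - t\<bar>"
      using lipschitz_on_normD[OF lip, of b t] sub \<open>a \<le> b\<close> by (auto simp: dist_real_def)
    also have "\<dots> \<le> L * (1 / real N)"
      using t ab lipschitz_on_nonneg[OF lip] by (intro mult_left_mono) auto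
    finally show "cmod (f b - f t) \<le> L / real N" by simp
  qed
  ultimately show ?thesis
    using ab by (simp add: a_def b_def power2_eq_square)
qed

lemma riemann_sum_error:
  fixes f :: "real \<Rightarrow> complex"
  assumes lip: "L-lipschitz_on {0..1} f" and N: "N \<ge> 1" and "j \<le> k" "k \<le> N"
  shows "cmod ((\<Sum>i\<in>{j<..k}. f (real i / real N)) / of_nat N - integral {real j / real N..real k / real N} f)
     \<le> real (k - j) * L / real N ^ 2"
  using \<open>j \<le> k\<close> \<open>k \<le> N\<close>
proof (induction k rule: dec_induct)
  case base
  then show ?case by simp
next
  case (step m)
  have "{real j / real N..real (Suc m) / real N} \<subseteq> {0..1}"
    using N step.prems by (auto simp: field_simps)
  then have "f integrable_on {real j / real N..real (Suc m) / real N}"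
    by (intro integrable_continuous_real continuous_on_subset[OF lipschitz_on_continuous_on[OF lip]])
  then have split: "integral {real j / real N..real (Suc m) / real N} f
      = integral {real j / real N..real m / real N} f + integral {real m / real N..real (Suc m) / real N} f"
    using N step.hyps by (intro Henstock_Kurzweil_Integration.integral_combine[symmetric]) (auto simp: divide_right_mono)
  have "{j<..Suc m} = insert (Suc m) {j<..m}"
    using step.hyps by auto
  then have "(\<Sum>i\<in>{j<..Suc m}. f (real i / real N)) / of_nat N - integral {real j / real N..real (Suc m) / real N} f
     = ((\<Sum>i\<in>{j<..m}. f (real i / real N)) / of_nat N - integral {real j / real N..real m / real N} f)
       + (f (real (Suc m) / real N) / of_nat N - integral {real m / real N..real (Suc m) / real N} f)"
    unfolding split by (simp add: add_divide_distrib del: of_nat_Suc)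
  also have "cmod \<dots> \<le> real (m - j) * L / real N ^ 2 + L / real N ^ 2"
    using step.IH step.prems right_endpoint_error[OF lip N step.prems]
    by (intro order_trans[OF norm_triangle_ineq] add_mono) auto
  also have "\<dots> = real (Suc m - j) * L / real N ^ 2"
    using step.hyps by (simp add: Suc_diff_le of_nat_diff add_divide_distrib[symmetric] algebra_simps)
  finally show ?case .
qed

corollary riemann_sum_error_le:
  fixes f :: "real \<Rightarrow> complex"
  assumes lip: "L-lipschitz_on {0..1} f" and N: "N \<ge> 1" and "j \<le> k" "k \<le> N"
  shows "cmod ((\<Sum>i\<in>{j<..k}. f (real i / real N)) / of_nat N - integral {real j / real N..real k / real N} f)
     \<le> L / real N"
proof -
  have "real (k - j) * L / real N ^ 2 \<le> real N * L / real N ^ 2"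
    using assms lipschitz_on_nonneg[OF lip] by (intro divide_right_mono mult_right_mono) auto
  also have "\<dots> = L / real N"
    by (simp add: power2_eq_square)
  finally show ?thesis
    using riemann_sum_error[OF assms] by linarith
qed

lemma set_integral_Icc_eq_integral:
  fixes G f :: "real \<Rightarrow> complex"
  assumes "a \<le> b" and cont: "continuous_on {a..b} f" and eq: "\<And>x. a < x \<Longrightarrow> x < b \<Longrightarrow> G x = f x"
  shows "(LBINT x:{a..b}. G x) = integral {a..b} f"
proof -
  have f_meas: "(\<lambda>x. indicator {a..b} x *\<^sub>R f x) \<in> borel_measurable lborel"
    using borel_measurable_continuous_on_indicator[OF _ cont] by simp
  have "(\<lambda>x. indicator {a..b} x *\<^sub>R G x)
      = (\<lambda>x. if x = a then G a else if x = b then G b else indicator {a..b} x *\<^sub>R f x)"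
    using \<open>a \<le> b\<close> eq by (intro ext) (auto simp: indicator_def less_le)
  then have G_meas: "(\<lambda>x. indicator {a..b} x *\<^sub>R G x) \<in> borel_measurable lborel"
    using f_meas by (auto intro!: measurable_If)
  have "AE x in lborel. indicator {a..b} x *\<^sub>R G x = indicator {a..b} x *\<^sub>R f x"
    using AE_lborel_singleton[of a] AE_lborel_singleton[of b]
    by eventually_elim (auto simp: eq indicator_def)
  then have "(LBINT x:{a..b}. G x) = (LBINT x:{a..b}. f x)"
    unfolding set_lebesgue_integral_def using G_meas f_meas by (rule integral_cong_AE[rotated 2])
  also have "\<dots> = integral {a..b} f"
    by (intro set_borel_integral_eq_integral(2)) (simp add: set_integrable_def borel_integrable_compact cont)
  finally show ?thesis .
qed

locale uniform_pieces =
  fixes n :: nat and g :: "real list \<Rightarrow> complex" and P :: "nat \<Rightarrow> real list \<Rightarrow> complex"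
    and L M :: real
  assumes n_ge_1: "n \<ge> 1"
    and g_eq_piece: "\<And>m zs. m \<in> {1..n} \<Longrightarrow> length zs = n \<Longrightarrow> vshape m zs \<Longrightarrow> set zs \<subseteq> {0..1}
      \<Longrightarrow> g zs = P m zs"
    and piece_bounded: "\<And>m x xs. m \<in> {1..n} \<Longrightarrow> length xs = n - 1 \<Longrightarrow> set xs \<subseteq> {0..1} \<Longrightarrow> x \<in> {0..1}
      \<Longrightarrow> cmod (P m (x # xs)) \<le> M"
    and piece_lipschitz: "\<And>m xs. m \<in> {1..n} \<Longrightarrow> length xs = n - 1 \<Longrightarrow> set xs \<subseteq> {0..1}
      \<Longrightarrow> L-lipschitz_on {0..1} (\<lambda>x. P m (x # xs))"

lemma Dn_uniform_pieces:
  assumes "n \<ge> 1" "g \<in> Dn n"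
  obtains P L M where "uniform_pieces n g P L M"
proof -
  obtain P where "\<forall>m\<in>{1..n}. poly_fun n (P m) \<and>
      (\<forall>zs. length zs = n \<and> vshape m zs \<and> (\<forall>x\<in>set zs. 0 \<le> x \<and> x \<le> 1) \<longrightarrow> g zs = P m zs)"
    using bchoice[OF conjunct2[OF assms(2)[unfolded Dn_def mem_Collect_eq]]] by blast
  moreover have "set zs \<subseteq> {0..1} \<longleftrightarrow> (\<forall>x\<in>set zs. 0 \<le> x \<and> x \<le> (1::real))" for zs
    by auto
  ultimately have P: "\<And>m. m \<in> {1..n} \<Longrightarrow> poly_fun n (P m)"
    "\<And>m zs. m \<in> {1..n} \<Longrightarrow> length zs = n \<Longrightarrow> vshape m zs \<Longrightarrow> set zs \<subseteq> {0..1} \<Longrightarrow> g zs = P m zs"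
    by blast+
  define bounds where "bounds m L M \<longleftrightarrow>
    (\<forall>x xs. length xs = n - 1 \<and> set xs \<subseteq> {0..1} \<and> x \<in> {0..1} \<longrightarrow> cmod (P m (x # xs)) \<le> M) \<and>
    (\<forall>xs. length xs = n - 1 \<and> set xs \<subseteq> {0..1} \<longrightarrow> L-lipschitz_on {0..1} (\<lambda>x. P m (x # xs)))" for m L M
  have "\<exists>L M. bounds m L M" if "m \<in> {1..n}" for m
  proof -
    have "poly_fun (Suc (n - 1)) (P m)"
      using P(1)[OF that] assms(1) by simp
    then obtain L M where "bounds m L M"
      unfolding bounds_def by (rule poly_fun_Cons_bounds) blast
    then show ?thesis by blast
  qed
  then obtain Lm Mm where LM: "\<And>m. m \<in> {1..n} \<Longrightarrow> bounds m (Lm m) (Mm m)"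
    by metis
  have "bounds m (Max (Lm ` {1..n})) (Max (Mm ` {1..n}))" if m: "m \<in> {1..n}" for m
  proof -
    have "Lm m \<le> Max (Lm ` {1..n})" "Mm m \<le> Max (Mm ` {1..n})"
      using m by simp_all
    then show ?thesis
      using LM[OF m] unfolding bounds_def by (auto intro: lipschitz_on_mono order_trans)
  qed
  then have "uniform_pieces n g P (Max (Lm ` {1..n})) (Max (Mm ` {1..n}))"
    using assms(1) P(2) by unfold_locales (auto simp: bounds_def)
  then show thesis ..
qed

definition adjoint_sum :: "nat \<Rightarrow> (real list \<Rightarrow> complex) \<Rightarrow> nat list \<Rightarrow> complex" where
  "adjoint_sum N g ws = (\<Sum>i=1..N. if validI (i # ws) then g (grid N (i # ws)) else 0)"

lemma inverse_sqrt_mult_powr_pred: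
  assumes "N \<ge> 1" "n \<ge> 1"
  shows "1 / sqrt (real N) * real N powr (- real n / 2) = real N powr (- real (n - 1) / 2) / real N"
proof -
  have "1 / sqrt (real N) * real N powr (- real (n - 1) / 2) = real N powr (- real n / 2)"
    using inverse_sqrt_mult_powr[OF assms(1), of "n - 1"] assms(2) by simp
  then show ?thesis
    by (metis divide_divide_eq_left times_divide_eq_left mult_1 real_sqrt_mult_self abs_of_nat)
qed

lemma adjoint_difference_eq:
  assumes N: "N \<ge> 1" and n: "n \<ge> 1"
  shows "aN_adj N (vN N n g) w - vN N (n - 1) (a_adj_cont g) w =
    (if length w = n - 1 \<and> validI w \<and> (\<forall>i\<in>set w. i \<le> N)
     then complex_of_real (real N powr (- real (n - 1) / 2))
          * (adjoint_sum N g w / of_nat N - a_adj_cont g (grid N w))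
     else 0)"
proof (cases "length w = n - 1 \<and> validI w \<and> (\<forall>i\<in>set w. i \<le> N)")
  case True
  have "(\<Sum>i=1..N. if validI w \<and> validI (i # w) then vN N n g (i # w) else 0)
      = complex_of_real (real N powr (- real n / 2)) * adjoint_sum N g w"
    unfolding adjoint_sum_def sum_distrib_left using True n by (intro sum.cong) (auto simp: vN_def)
  then have "aN_adj N (vN N n g) w
      = complex_of_real (1 / sqrt (real N) * real N powr (- real n / 2)) * adjoint_sum N g w"
    unfolding aN_adj_def by simp
  also have "\<dots> = complex_of_real (real N powr (- real (n - 1) / 2)) * (adjoint_sum N g w / of_nat N)"
    unfolding inverse_sqrt_mult_powr_pred[OF N n] by simp
  finally show ?thesis
    using True by (simp add: vN_def right_diff_distrib)
next
  case False
  then have "(if validI w \<and> validI (i # w) then vN N n g (i # w) else 0) = 0" for i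
    using n validI_Cons_tl[of i w] by (auto simp: vN_def validI_def)
  then have "aN_adj N (vN N n g) w = 0"
    unfolding aN_adj_def by simp
  moreover have "vN N (n - 1) (a_adj_cont g) w = 0"
    using False unfolding vN_def by argo
  ultimately show ?thesis
    using False by (simp only: if_False diff_self)
qed

lemma dv_norm_le_finite_support:
  assumes "finite S" "\<And>w. w \<notin> S \<Longrightarrow> v w = 0" "\<And>w. w \<in> S \<Longrightarrow> cmod (v w) \<le> B" "B \<ge> 0"
  shows "dv_norm v \<le> sqrt (real (card S)) * B"
proof -
  have "infsum (\<lambda>w. (cmod (v w))\<^sup>2) UNIV = (\<Sum>w\<in>S. (cmod (v w))\<^sup>2)"
    using assms(1,2) by (subst infsum_cong_neutral[where T = S]) auto
  also have "\<dots> \<le> (\<Sum>w\<in>S. B\<^sup>2)"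
    using assms(3) by (intro sum_mono power_mono) auto
  finally have "dv_norm v \<le> sqrt (real (card S) * B\<^sup>2)"
    unfolding dv_norm_def by (simp add: real_sqrt_le_mono)
  then show ?thesis
    using assms(4) by (simp add: real_sqrt_mult)
qed

context uniform_pieces
begin

lemma L_nonneg: "L \<ge> 0"
proof -
  have "set (replicate (n - 1) (0::real)) \<subseteq> {0..1}"
    by (cases "n - 1") auto
  then show ?thesis
    using piece_lipschitz[of 1 "replicate (n - 1) 0"] n_ge_1 lipschitz_on_nonneg by simp
qed

lemma M_nonneg: "M \<ge> 0"
proof -
  have "set (replicate (n - 1) (0::real)) \<subseteq> {0..1}"
    by (cases "n - 1") auto
  then have "cmod (P 1 (0 # replicate (n - 1) 0)) \<le> M"
    using piece_bounded[of 1 "replicate (n - 1) 0" 0] n_ge_1 by simp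
  then show ?thesis
    by (rule order_trans[OF norm_ge_zero])
qed

lemma piece_continuous:
  "m \<in> {1..n} \<Longrightarrow> length xs = n - 1 \<Longrightarrow> set xs \<subseteq> {0..1} \<Longrightarrow> continuous_on {0..1} (\<lambda>x. P m (x # xs))"
  using piece_lipschitz by (rule lipschitz_on_continuous_on)

lemma g_Cons_eq_piece:
  "m \<in> {1..n} \<Longrightarrow> length xs = n - 1 \<Longrightarrow> set xs \<subseteq> {0..1} \<Longrightarrow> x \<in> {0..1} \<Longrightarrow> vshape m (x # xs)
    \<Longrightarrow> g (x # xs) = P m (x # xs)"
  using g_eq_piece[of m "x # xs"] n_ge_1 by simp

lemma adjoint_sum_Nil:
  assumes "n = 1" "N \<ge> 1"
  shows "adjoint_sum N g [] = (\<Sum>i\<in>{0<..N}. P 1 [real i / real N])"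
  unfolding adjoint_sum_def
proof (rule sum.cong)
  fix i assume "i \<in> {0<..N}"
  then show "(if validI [i] then g (grid N [i]) else 0) = P 1 [real i / real N]"
    using assms g_Cons_eq_piece[of 1 "[]" "real i / real N"] vshape_singleton[of i]
      vshape_singleton[of "real i / real N"] by (auto simp: validI_def)
qed auto

lemma a_adj_cont_Nil:
  assumes "n = 1"
  shows "a_adj_cont g [] = integral {0..1} (\<lambda>x. P 1 [x])"
  using assms g_Cons_eq_piece[of 1 "[]"] vshape_singleton piece_continuous[of 1 "[]"]
  by (force intro!: set_integral_Icc_eq_integral)

lemma adjoint_sum_Cons:
  assumes N: "N \<ge> 1" and ws: "length (w # ws) = n - 1" "validI (w # ws)" "\<forall>i\<in>set (w # ws). i \<le> N"
    and m: "vshape m (w # ws)"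
  shows "adjoint_sum N g (w # ws) = (\<Sum>i\<in>{w<..N}. P (Suc m) (real i / real N # grid N (w # ws)))
    + (if vshape 1 (w # ws) then \<Sum>i\<in>{0<..<w}. P 1 (real i / real N # grid N (w # ws)) else 0)"
proof -
  define xs where "xs = grid N (w # ws)"
  have xs: "length xs = n - 1" "set xs \<subseteq> {0..1}"
    using ws N by (auto simp: xs_def)
  have pieces: "Suc m \<in> {1..n}" "1 \<in> {1..n}"
    using m ws(1) n_ge_1 by (auto simp: vshape_def)
  have x_in: "real i / real N \<in> {0..1}" if "i \<le> N" for i
    using that N by auto
  have grid_less_iff: "real i / real N < real j / real N \<longleftrightarrow> i < j" for i j
    using N by (simp add: divide_less_cancel)
  have term_eq: "(if validI (i # w # ws) then g (grid N (i # w # ws)) else 0)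
      = (if w < i then P (Suc m) (real i / real N # xs) else 0)
        + (if vshape 1 (w # ws) \<and> i < w then P 1 (real i / real N # xs) else 0)"
    if i: "i \<in> {1..N}" for i
  proof -
    have "vshape m (real w / real N # grid N ws)"
      using m vshape_scaled_iff[OF N, of m "w # ws"] by simp
    then have "vshape (Suc m) (real i / real N # xs)" if "w < i"
      using vshape_Cons_greater[of m "real w / real N" "grid N ws" "real i / real N"] that grid_less_iff
      by (simp add: xs_def)
    moreover have "vshape 1 (real w / real N # grid N ws) \<longleftrightarrow> vshape 1 (w # ws)"
      using vshape_scaled_iff[OF N, of 1 "w # ws"] by simp
    then have "vshape 1 (real i / real N # xs)" if "vshape 1 (w # ws)" "i < w"
      using vshape_Cons_less[of "real w / real N" "grid N ws" "real i / real N"] that grid_less_iff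
      by (simp add: xs_def)
    moreover have "validI (i # w # ws) \<longleftrightarrow> w < i \<or> i < w \<and> vshape 1 (w # ws)"
      using validI_Cons_Cons_iff[OF ws(2), of i] i by auto
    moreover have "grid N (i # w # ws) = real i / real N # xs"
      by (simp add: xs_def)
    ultimately show ?thesis
      using g_Cons_eq_piece[OF _ xs _] pieces x_in i by auto
  qed
  have "adjoint_sum N g (w # ws)
      = (\<Sum>i=1..N. if w < i then P (Suc m) (real i / real N # xs) else 0)
        + (\<Sum>i=1..N. if vshape 1 (w # ws) \<and> i < w then P 1 (real i / real N # xs) else 0)"
    unfolding adjoint_sum_def sum.distrib[symmetric] by (rule sum.cong[OF refl term_eq])
  moreover have "{i \<in> {1..N}. w < i} = {w<..N}" "{i \<in> {1..N}. i < w} = {0<..<w}"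
    using ws(3) by auto
  ultimately show ?thesis
    unfolding xs_def by (cases "vshape 1 (w # ws)") (simp_all add: sum.inter_filter[symmetric])
qed

lemma a_adj_cont_Cons:
  assumes xs: "length (x # xs) = n - 1" "set (x # xs) \<subseteq> {0..1}" and m: "vshape m (x # xs)"
  shows "a_adj_cont g (x # xs)
    = (if vshape 1 (x # xs) then integral {0..x} (\<lambda>y. P 1 (y # x # xs)) else 0)
      + integral {x..1} (\<lambda>y. P (Suc m) (y # x # xs))"
proof -
  have pieces: "Suc m \<in> {1..n}" "1 \<in> {1..n}"
    using m xs(1) n_ge_1 by (auto simp: vshape_def)
  have x: "0 \<le> x" "x \<le> 1"
    using xs(2) by auto
  have "(LBINT y:{x..1}. g (y # x # xs)) = integral {x..1} (\<lambda>y. P (Suc m) (y # x # xs))"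
  proof (rule set_integral_Icc_eq_integral)
    show "continuous_on {x..1} (\<lambda>y. P (Suc m) (y # x # xs))"
      using continuous_on_subset[OF piece_continuous[OF pieces(1) xs]] x by auto
    fix y assume "x < y" "y < 1"
    then show "g (y # x # xs) = P (Suc m) (y # x # xs)"
      using g_Cons_eq_piece[OF pieces(1) xs] vshape_Cons_greater[OF m] x by auto
  qed (rule x(2))
  moreover have "(LBINT y:{0..x}. g (y # x # xs)) = integral {0..x} (\<lambda>y. P 1 (y # x # xs))"
    if "vshape 1 (x # xs)"
  proof (rule set_integral_Icc_eq_integral)
    show "continuous_on {0..x} (\<lambda>y. P 1 (y # x # xs))"
      using continuous_on_subset[OF piece_continuous[OF pieces(2) xs]] x by auto
    fix y assume "0 < y" "y < x"
    then show "g (y # x # xs) = P 1 (y # x # xs)"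
      using g_Cons_eq_piece[OF pieces(2) xs] vshape_Cons_less[OF that] x by auto
  qed (rule x(1))
  ultimately show ?thesis
    by simp
qed

lemma adjoint_sum_error:
  assumes N: "N \<ge> 1" and ws: "length ws = n - 1" "validI ws" "\<forall>i\<in>set ws. i \<le> N"
  shows "cmod (adjoint_sum N g ws / of_nat N - a_adj_cont g (grid N ws)) \<le> (2 * L + M) / real N"
proof (cases ws)
  case Nil
  then have "n = 1"
    using ws(1) n_ge_1 by simp
  then have "cmod (adjoint_sum N g ws / of_nat N - a_adj_cont g (grid N ws)) \<le> L / real N"
    using riemann_sum_error_le[OF piece_lipschitz[of 1 "[]"] N, of 0 N] N Nil
      adjoint_sum_Nil[OF _ N] a_adj_cont_Nil by simp
  also have "\<dots> \<le> (2 * L + M) / real N"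
    using L_nonneg M_nonneg by (simp add: divide_right_mono)
  finally show ?thesis .
next
  case (Cons w wt)
  obtain m where m: "vshape m ws"
    using ws(2) Cons by (auto simp: validI_def)
  define xs where "xs = grid N ws"
  have xs: "length xs = n - 1" "set xs \<subseteq> {0..1}" "vshape m xs"
    using ws N m by (auto simp: xs_def vshape_scaled_iff)
  define F where "F k = (\<lambda>y. P k (y # xs))" for k
  have pieces: "Suc m \<in> {1..n}" "1 \<in> {1..n}"
    using m ws(1) n_ge_1 by (auto simp: vshape_def)
  have lip: "L-lipschitz_on {0..1} (F k)" if "k \<in> {1..n}" for k
    unfolding F_def using piece_lipschitz[OF that xs(1,2)] .
  have w: "1 \<le> w" "w \<le> N"
    using ws Cons by (auto simp: validI_def)
  define upper_error where "upper_error = (\<Sum>i\<in>{w<..N}. F (Suc m) (real i / real N)) / of_nat N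
    - integral {real w / real N..real N / real N} (F (Suc m))"
  define lower_error where "lower_error = (\<Sum>i\<in>{0<..w}. F 1 (real i / real N)) / of_nat N
    - integral {real 0 / real N..real w / real N} (F 1)"
  text \<open>The discrete lower sum lacks its right endpoint \<open>i = w\<close>; this costs the extra \<open>M/N\<close>.\<close>
  have "{0<..w} = insert w {0<..<w}"
    using w by auto
  then have lower_sum: "(\<Sum>i\<in>{0<..<w}. F 1 (real i / real N))
      = (\<Sum>i\<in>{0<..w}. F 1 (real i / real N)) - F 1 (real w / real N)"
    by simp
  have error_split: "adjoint_sum N g ws / of_nat N - a_adj_cont g xs
      = upper_error + (if vshape 1 ws then lower_error - F 1 (real w / real N) / of_nat N else 0)"
    using adjoint_sum_Cons[OF N ws[unfolded Cons] m[unfolded Cons]] N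
      a_adj_cont_Cons[of "real w / real N" "grid N wt" m] xs vshape_scaled_iff[OF N, of 1 ws] lower_sum
    unfolding upper_error_def lower_error_def
    by (cases "vshape 1 ws") (simp_all add: Cons xs_def F_def diff_divide_distrib add_divide_distrib)
  moreover have "cmod upper_error \<le> L / real N"
    unfolding upper_error_def using riemann_sum_error_le[OF lip[OF pieces(1)] N, of w N] w by simp
  moreover have "cmod lower_error \<le> L / real N"
    unfolding lower_error_def using riemann_sum_error_le[OF lip[OF pieces(2)] N, of 0 w] w by simp
  moreover have "cmod (F 1 (real w / real N) / of_nat N) \<le> M / real N"
    using piece_bounded[OF pieces(2) xs(1,2)] w
    by (simp add: F_def norm_divide divide_right_mono)
  ultimately have "cmod (if vshape 1 ws then lower_error - F 1 (real w / real N) / of_nat N else 0)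
      \<le> L / real N + M / real N"
    using L_nonneg M_nonneg by (auto intro: order_trans[OF norm_triangle_ineq4])
  with \<open>cmod upper_error \<le> L / real N\<close>
  have "cmod (adjoint_sum N g ws / of_nat N - a_adj_cont g xs) \<le> L / real N + (L / real N + M / real N)"
    unfolding error_split by (rule order_trans[OF norm_triangle_ineq add_mono])
  then show ?thesis
    by (simp add: xs_def add_divide_distrib)
qed

lemma adjoint_error_norm:
  assumes N: "N \<ge> 1"
  shows "dv_norm (\<lambda>w. aN_adj N (vN N n g) w - vN N (n - 1) (a_adj_cont g) w) \<le> (2 * L + M) / real N"
proof -
  define c where "c = real N powr (- real (n - 1) / 2)"
  define S where "S = {w. set w \<subseteq> {1..N} \<and> length w = n - 1}"
  have sqrt_card_c: "sqrt (real (card S)) * c = 1"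
  proof -
    have "card S = N ^ (n - 1)"
      unfolding S_def by (simp add: card_lists_length_eq)
    then show ?thesis
      using N by (simp add: c_def powr_half_sqrt[symmetric] powr_realpow[symmetric] powr_powr
          powr_add[symmetric])
  qed
  have "dv_norm (\<lambda>w. aN_adj N (vN N n g) w - vN N (n - 1) (a_adj_cont g) w)
      \<le> sqrt (real (card S)) * (c * ((2 * L + M) / real N))"
  proof (rule dv_norm_le_finite_support)
    show "finite S"
      unfolding S_def by (rule finite_lists_length_eq) simp
    show "c * ((2 * L + M) / real N) \<ge> 0"
      using L_nonneg M_nonneg by (simp add: c_def)
    fix w
    show "aN_adj N (vN N n g) w - vN N (n - 1) (a_adj_cont g) w = 0" if "w \<notin> S"
      using that adjoint_difference_eq[OF N n_ge_1] by (auto simp: S_def validI_def)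
    show "cmod (aN_adj N (vN N n g) w - vN N (n - 1) (a_adj_cont g) w) \<le> c * ((2 * L + M) / real N)"
    proof (cases "length w = n - 1 \<and> validI w \<and> (\<forall>i\<in>set w. i \<le> N)")
      case True
      then show ?thesis
        using adjoint_difference_eq[OF N n_ge_1] adjoint_sum_error[OF N]
        by (simp add: c_def norm_mult mult_left_mono del: times_divide_eq_right)
    next
      case False
      then have "aN_adj N (vN N n g) w - vN N (n - 1) (a_adj_cont g) w = 0"
        using adjoint_difference_eq[OF N n_ge_1, of g w] by (simp only: if_False)
      then show ?thesis
        using L_nonneg M_nonneg by (simp add: c_def)
    qed
  qed
  also have "\<dots> = (2 * L + M) / real N"
    using sqrt_card_c by (metis mult.assoc mult_1)
  finally show ?thesis .
qed

end

theorem mainTheorem16: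
  fixes n :: nat and g :: "real list \<Rightarrow> complex"
  assumes "n \<ge> 1" and "g \<in> Dn n"
  shows "(\<forall>N\<ge>1. aN N (vN N n g) = vN N (n + 1) (a_cont g)) \<and>
    (\<exists>C>0. \<forall>N\<ge>1. dv_norm (\<lambda>w. aN_adj N (vN N n g) w - vN N (n - 1) (a_adj_cont g) w)
                      \<le> C / real N)"
proof
  show "\<forall>N\<ge>1. aN N (vN N n g) = vN N (n + 1) (a_cont g)"
    using aN_vN[OF assms(1)] by blast
next
  obtain P L M where pieces: "uniform_pieces n g P L M"
    using Dn_uniform_pieces[OF assms] .
  have "dv_norm (\<lambda>w. aN_adj N (vN N n g) w - vN N (n - 1) (a_adj_cont g) w) \<le> (2 * L + M + 1) / real N"
    if "N \<ge> 1" for N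
    using uniform_pieces.adjoint_error_norm[OF pieces that] by (simp add: divide_right_mono order_trans)
  moreover have "2 * L + M + 1 > 0"
    using uniform_pieces.L_nonneg[OF pieces] uniform_pieces.M_nonneg[OF pieces] by simp
  ultimately show "\<exists>C>0. \<forall>N\<ge>1. dv_norm (\<lambda>w. aN_adj N (vN N n g) w - vN N (n - 1) (a_adj_cont g) w)
      \<le> C / real N"
    by blast
qed

end
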